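(* Let $K$ be a totally real field, $L/K$ a CM extension with CM type $\Phi$, and $M$ a regular, polarized, special realization over $K$ with coefficients in a number field $E$, of rank $n$ and pure of weight $w(M)$, with Hodge numbers $p_1(\sigma,\varphi)>\dots>p_n(\sigma,\varphi)$ for $\sigma\in J_K,\varphi\in J_E$. Fix $\varphi\in J_E$ and $r\in\{0,\dots,n\}$. If $r>0$, set $a_\tau^{(r,\varphi)}=w(M)-2p_r(\tau|_K,\varphi)+1$ for $\tau\in\Phi$; if $r=0$, set $a_\tau^{(0,\varphi)}=a^{(0)}$ for all $\tau\in\Phi$, where $a^{(0)}$ is a fixed integer with $a^{(0)}<\min\{w(M)-2p_1(\sigma,\psi)\}_{\sigma\in J_K,\psi\in J_E}$ and $a^{(0)}\equiv w(M)+1\pmod 2$. Let $\chi^{(r,\varphi)}$ be an algebraic Hecke character of $L$ of infinity type $(n_\tau^{(r,\varphi)})_{\tau\in J_L}$ with $n_\tau^{(r,\varphi)}-n_{\bar\tau}^{(r,\varphi)}=a_\tau^{(r,\varphi)}$ for all $\tau\in\Phi$. Then: (i) $\chi^{(r,\varphi)}$ is critical, except possibly when $n$ is even and $r=n/2$; in that case $\chi^{(n/2,\varphi)}$ is critical if and only if $p_{n/2}(\sigma,\varphi)\neq p_{n/2+1}(\sigma,\varphi)+1$ for every $\sigma\in J_K$. (ii) $n_\tau^{(r,\varphi)}>n_{\bar\tau}^{(r,\varphi)}$ for one (equivalently every) $\tau\in\Phi$ if and only if $r\in\{\lfloor n/2\rfloor+1,\dots,n\}$.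
   Context: $J_F=\operatorname{Hom}(F,\mathbb C)$; $\bar\tau=c\circ\tau$; a CM type $\Phi\subset J_L$ satisfies $J_L=\Phi\sqcup\bar\Phi$. A realization $M$ over $K$ with coefficients in $E$ (in Deligne's sense of realizations of motives for absolute Hodge cycles) has, for each $\sigma\in J_K$, a Betti realization $M_\sigma$ (an $E$-vector space of dimension $n$ with a Frobenius involution $F_\sigma$) and a Hodge decomposition $M_\sigma\otimes_{E,\varphi}\mathbb C=\bigoplus_{p+q=w(M)}M_\sigma^{pq}(\varphi)$ for $\varphi\in J_E$. $M$ is regular if all $M_\sigma^{pq}(\varphi)$ have dimension at most 1; then $p_1(\sigma,\varphi)>\dots>p_n(\sigma,\varphi)$ are the $p$ with $M_\sigma^{pq}(\varphi)\ne0$, and $p_i(\sigma,\varphi)+p_{n+1-i}(\sigma,\varphi)=w(M)$. $M$ is polarized if there is a nondegenerate morphism $M\otimes_E M\to E(-w(M))$, symmetric if $w(M)$ is even and alternating if odd; $M$ is special if each $F_\sigma$ acts on $M_\sigma^{w(M)/2,w(M)/2}$ by a scalar $\pm1$ independent of $\sigma$. An algebraic Hecke character $\chi$ of $L$ has infinity type $(n_\tau)_{\tau\in J_L}$ meaning $\chi(x)=\tau(x)^{-n_\tau}\bar\tau(x)^{-n_{\bar\tau}}$ on the identity component at the archimedean place of $\tau$; $\chi$ is critical if $n_\tau\ne n_{\bar\tau}$ for all $\tau\in J_L$. *)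

theory Defs
  imports Main
begin

text \<open>Embeddings: J_L is modelled by a finite type 'l, J_K by a finite type 'k,
  J_E by a finite type 'e.  res is restriction J_L -> J_K, cc is tau |-> bar tau.\<close>

definition cm_extension :: "('l \<Rightarrow> 'k) \<Rightarrow> ('l \<Rightarrow> 'l) \<Rightarrow> bool" where
  "cm_extension res cc \<longleftrightarrow>
     (\<forall>\<tau>. cc (cc \<tau>) = \<tau> \<and> cc \<tau> \<noteq> \<tau> \<and> res (cc \<tau>) = res \<tau>) \<and>
     surj res \<and>
     (\<forall>\<tau> \<tau>'. res \<tau>' = res \<tau> \<longrightarrow> \<tau>' = \<tau> \<or> \<tau>' = cc \<tau>)"

definition is_cm_type :: "('l \<Rightarrow> 'l) \<Rightarrow> 'l set \<Rightarrow> bool" where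
  "is_cm_type cc \<Phi> \<longleftrightarrow> \<Phi> \<inter> cc ` \<Phi> = {} \<and> \<Phi> \<union> cc ` \<Phi> = UNIV"

text \<open>Hodge data of a realization of rank n: hdim sigma phi p = dim M_sigma^{p,w-p}(phi).\<close>

definition hodge_data :: "('k \<Rightarrow> 'e \<Rightarrow> int \<Rightarrow> nat) \<Rightarrow> nat \<Rightarrow> bool" where
  "hodge_data hdim n \<longleftrightarrow> (\<forall>\<sigma> \<phi>. finite {p. hdim \<sigma> \<phi> p \<noteq> 0} \<and>
       (\<Sum>p\<in>{p. hdim \<sigma> \<phi> p \<noteq> 0}. hdim \<sigma> \<phi> p) = n)"

definition regular :: "('k \<Rightarrow> 'e \<Rightarrow> int \<Rightarrow> nat) \<Rightarrow> bool" where
  "regular hdim \<longleftrightarrow> (\<forall>\<sigma> \<phi> p. hdim \<sigma> \<phi> p \<le> 1)"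

definition hodge_p :: "('k \<Rightarrow> 'e \<Rightarrow> int \<Rightarrow> nat) \<Rightarrow> 'k \<Rightarrow> 'e \<Rightarrow> nat \<Rightarrow> int" where
  "hodge_p hdim \<sigma> \<phi> i = rev (sorted_list_of_set {p. hdim \<sigma> \<phi> p \<noteq> 0}) ! (i - 1)"

definition critical :: "('l \<Rightarrow> 'l) \<Rightarrow> ('l \<Rightarrow> int) \<Rightarrow> bool" where
  "critical cc ninf \<longleftrightarrow> (\<forall>\<tau>. ninf \<tau> \<noteq> ninf (cc \<tau>))"

end

theory Submission
  imports Defs
begin

text \<open>For 1 <= r <= n the symmetry p_r + p_(n+1-r) = w turns the
  twist w - 2 p_r + 1 into p_(n+1-r) - p_r + 1.  The p_i strictly decrease, so this integer is
  positive exactly when r > n/2, and it vanishes only when n is even, r = n/2 and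
  p_(n/2) = p_(n/2+1) + 1.  For r = 0 the twist a0 is negative, since w - 2 p_1 = p_n - p_1 <= 0.
  A CM type contains exactly one of tau, tau-bar for every tau and restricts onto J_K, so these
  conditions on Phi decide criticality on all of J_L and range over all of J_K.\<close>

lemma card_hodge_support:
  assumes "hodge_data hdim n" and "regular hdim"
  shows "finite {p. hdim \<sigma> \<psi> p \<noteq> 0}" and "card {p. hdim \<sigma> \<psi> p \<noteq> 0} = n"
proof -
  let ?S = "{p. hdim \<sigma> \<psi> p \<noteq> 0}"
  show "finite ?S" using assms(1) unfolding hodge_data_def by blast
  have "\<And>p. p \<in> ?S \<Longrightarrow> hdim \<sigma> \<psi> p = 1"
    using assms(2) unfolding regular_def by (simp add: le_antisym Suc_leI)
  hence "(\<Sum>p\<in>?S. hdim \<sigma> \<psi> p) = (\<Sum>p\<in>?S. 1)" by (intro sum.cong) auto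
  thus "card ?S = n" using assms(1) unfolding hodge_data_def by simp
qed

lemma hodge_p_strict_decreasing:
  assumes "hodge_data hdim n" and "regular hdim" and "1 \<le> i" "i < j" "j \<le> n"
  shows "hodge_p hdim \<sigma> \<psi> j < hodge_p hdim \<sigma> \<psi> i"
proof -
  define xs where "xs = rev (sorted_list_of_set {p. hdim \<sigma> \<psi> p \<noteq> 0})"
  have "length xs = n"
    using card_hodge_support[OF assms(1,2)] by (simp add: xs_def)
  moreover have "sorted_wrt (>) xs"
    unfolding xs_def sorted_wrt_rev using strict_sorted_list_of_set by simp
  ultimately have "xs ! (j - 1) < xs ! (i - 1)"
    using assms(3-5) sorted_wrt_nth_less[of "(>)" xs "i - 1" "j - 1"] by simp
  thus ?thesis unfolding hodge_p_def xs_def .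
qed

lemma hodge_p_antitone:
  assumes "hodge_data hdim n" and "regular hdim" and "1 \<le> i" "i \<le> j" "j \<le> n"
  shows "hodge_p hdim \<sigma> \<psi> j \<le> hodge_p hdim \<sigma> \<psi> i"
  using hodge_p_strict_decreasing[OF assms(1,2), of i j \<sigma> \<psi>] assms(3-5)
  by (cases "i = j") auto

lemma hodge_twist_sign:
  assumes hd: "hodge_data hdim n" and reg: "regular hdim"
    and sym: "\<And>\<sigma> \<psi> i. 1 \<le> i \<Longrightarrow> i \<le> n \<Longrightarrow>
                hodge_p hdim \<sigma> \<psi> i + hodge_p hdim \<sigma> \<psi> (n + 1 - i) = w"
    and r: "1 \<le> r" "r \<le> n"
  shows "w - 2 * hodge_p hdim \<sigma> \<phi> r + 1 = 0 \<longleftrightarrow>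
           even n \<and> r = n div 2 \<and> hodge_p hdim \<sigma> \<phi> (n div 2) = hodge_p hdim \<sigma> \<phi> (n div 2 + 1) + 1"
    and "0 < w - 2 * hodge_p hdim \<sigma> \<phi> r + 1 \<longleftrightarrow> n div 2 + 1 \<le> r"
proof -
  let ?p = "hodge_p hdim \<sigma> \<phi>"
  define q where "q = n + 1 - r"
  have q: "1 \<le> q" "q \<le> n" using r by (auto simp: q_def)
  have w: "w = ?p r + ?p q" unfolding q_def using sym[OF r] by simp
  have dec: "\<And>i j. 1 \<le> i \<Longrightarrow> i < j \<Longrightarrow> j \<le> n \<Longrightarrow> ?p j < ?p i"
    using hodge_p_strict_decreasing[OF hd reg] by blast
  consider "r < q" "q = r + 1" | "r + 1 < q" | "q \<le> r" by linarith
  hence "(?p q - ?p r + 1 = 0 \<longleftrightarrow>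
           even n \<and> r = n div 2 \<and> ?p (n div 2) = ?p (n div 2 + 1) + 1)
       \<and> (0 < ?p q - ?p r + 1 \<longleftrightarrow> n div 2 + 1 \<le> r)"
  proof cases
    case 1
    hence "even n" "r = n div 2" using q_def r by presburger+
    thus ?thesis using dec[of r q] 1 q by auto
  next
    case 2
    hence "\<not> n div 2 + 1 \<le> r" "\<not> (even n \<and> r = n div 2)" using q_def r by presburger+
    thus ?thesis using dec[of r "r + 1"] dec[of "r + 1" q] 2 q r by auto
  next
    case 3
    hence "n div 2 + 1 \<le> r" "r \<noteq> n div 2" using q_def r by auto
    thus ?thesis using hodge_p_antitone[OF hd reg q(1) 3 r(2), of \<sigma> \<phi>] by auto
  qed
  thus "w - 2 * ?p r + 1 = 0 \<longleftrightarrow> even n \<and> r = n div 2 \<and> ?p (n div 2) = ?p (n div 2 + 1) + 1"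
    and "0 < w - 2 * ?p r + 1 \<longleftrightarrow> n div 2 + 1 \<le> r"
    unfolding w by auto
qed

lemma weight_le_twice_hodge_p_first:
  assumes "hodge_data hdim n" and "regular hdim" and "1 \<le> n"
    and sym: "\<And>\<sigma> \<psi> i. 1 \<le> i \<Longrightarrow> i \<le> n \<Longrightarrow>
                hodge_p hdim \<sigma> \<psi> i + hodge_p hdim \<sigma> \<psi> (n + 1 - i) = w"
  shows "w \<le> 2 * hodge_p hdim \<sigma> \<psi> 1"
proof -
  have "hodge_p hdim \<sigma> \<psi> 1 + hodge_p hdim \<sigma> \<psi> (n + 1 - 1) = w"
    using assms(3) by (intro sym) auto
  thus ?thesis using hodge_p_antitone[OF assms(1,2), of 1 n \<sigma> \<psi>] assms(3) by simp
qed

lemma cm_type_cases: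
  assumes "is_cm_type cc \<Phi>"
  obtains "\<tau> \<in> \<Phi>" | t where "t \<in> \<Phi>" "\<tau> = cc t"
  using assms unfolding is_cm_type_def by blast

lemma critical_iff_on_cm_type:
  assumes inv: "\<And>\<tau>. cc (cc \<tau>) = \<tau>" and "is_cm_type cc \<Phi>"
  shows "critical cc ninf \<longleftrightarrow> (\<forall>\<tau>\<in>\<Phi>. ninf \<tau> \<noteq> ninf (cc \<tau>))"
  unfolding critical_def
proof (intro iffI allI)
  fix \<tau>
  assume "\<forall>\<tau>\<in>\<Phi>. ninf \<tau> \<noteq> ninf (cc \<tau>)"
  with assms show "ninf \<tau> \<noteq> ninf (cc \<tau>)"
    by (cases rule: cm_type_cases[OF assms(2), of \<tau>]) fastforce+
qed simp

lemma cm_type_restriction_surj: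
  assumes "cm_extension res cc" and "is_cm_type cc \<Phi>"
  shows "res ` \<Phi> = UNIV"
proof -
  have res_cc: "res (cc t) = res t" for t using assms(1) unfolding cm_extension_def by blast
  have "res \<tau> \<in> res ` \<Phi>" for \<tau>
    by (cases rule: cm_type_cases[OF assms(2), of \<tau>]) (auto simp: res_cc)
  moreover have "surj res" using assms(1) unfolding cm_extension_def by blast
  ultimately show ?thesis by (metis surjD subsetI subset_antisym UNIV_I)
qed

lemma Min_weight_minus_twice_hodge_p_first_nonpos:
  fixes hdim :: "'k::finite \<Rightarrow> 'e::finite \<Rightarrow> int \<Rightarrow> nat"
  assumes "hodge_data hdim n" and "regular hdim" and "1 \<le> n"
    and "\<And>\<sigma> \<psi> i. 1 \<le> i \<Longrightarrow> i \<le> n \<Longrightarrow>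
                hodge_p hdim \<sigma> \<psi> i + hodge_p hdim \<sigma> \<psi> (n + 1 - i) = w"
  shows "Min {w - 2 * hodge_p hdim \<sigma> \<psi> 1 | \<sigma> \<psi>. True} \<le> 0"
proof -
  define f where "f = (\<lambda>(\<sigma>, \<psi>). w - 2 * hodge_p hdim \<sigma> \<psi> 1)"
  fix \<sigma> \<psi>
  have "Min (range f) \<le> f (\<sigma>, \<psi>)" by (rule Min_le) auto
  also have "\<dots> \<le> 0"
    using weight_le_twice_hodge_p_first[OF assms] by (simp add: f_def)
  also have "range f = {w - 2 * hodge_p hdim \<sigma> \<psi> 1 | \<sigma> \<psi>. True}" by (auto simp: f_def)
  finally show ?thesis .
qed

theorem lemma2p4:
  fixes res :: "'l::finite \<Rightarrow> 'k::finite"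
    and cc :: "'l \<Rightarrow> 'l"
    and \<Phi> :: "'l set"
    and hdim :: "'k \<Rightarrow> 'e::finite \<Rightarrow> int \<Rightarrow> nat"
    and n :: nat and w :: int
    and \<phi> :: 'e and r :: nat and a0 :: int
    and a :: "'l \<Rightarrow> int" and ninf :: "'l \<Rightarrow> int"
  assumes cm: "cm_extension res cc"
    and cmtype: "is_cm_type cc \<Phi>"
    and hodge: "hodge_data hdim n"
    and n_pos: "n \<ge> 1"
    and reg: "regular hdim"
    and sym: "\<forall>\<sigma> \<psi> i. 1 \<le> i \<and> i \<le> n \<longrightarrow>
                hodge_p hdim \<sigma> \<psi> i + hodge_p hdim \<sigma> \<psi> (n + 1 - i) = w"
    and r_le: "r \<le> n"
    and a0_lt: "a0 < Min {w - 2 * hodge_p hdim \<sigma> \<psi> 1 | \<sigma> \<psi>. True}"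
    and a0_par: "a0 mod 2 = (w + 1) mod 2"
    and a_def: "\<forall>\<tau>\<in>\<Phi>. a \<tau> = (if r > 0 then w - 2 * hodge_p hdim (res \<tau>) \<phi> r + 1 else a0)"
    and inf_type: "\<forall>\<tau>\<in>\<Phi>. ninf \<tau> - ninf (cc \<tau>) = a \<tau>"
  shows "(\<not> (even n \<and> r = n div 2) \<longrightarrow> critical cc ninf)
       \<and> (even n \<and> r = n div 2 \<longrightarrow>
            (critical cc ninf \<longleftrightarrow>
              (\<forall>\<sigma>. hodge_p hdim \<sigma> \<phi> (n div 2) \<noteq> hodge_p hdim \<sigma> \<phi> (n div 2 + 1) + 1)))
       \<and> ((\<exists>\<tau>\<in>\<Phi>. ninf \<tau> > ninf (cc \<tau>)) \<longleftrightarrow> r \<in> {n div 2 + 1..n})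
       \<and> ((\<forall>\<tau>\<in>\<Phi>. ninf \<tau> > ninf (cc \<tau>)) \<longleftrightarrow> r \<in> {n div 2 + 1..n})"
proof -
  let ?Z = "\<lambda>\<sigma>. even n \<and> r = n div 2 \<and> hodge_p hdim \<sigma> \<phi> (n div 2) = hodge_p hdim \<sigma> \<phi> (n div 2 + 1) + 1"
  let ?half = "{n div 2 + 1..n}"
  have sym': "\<And>\<sigma> \<psi> i. 1 \<le> i \<Longrightarrow> i \<le> n \<Longrightarrow>
                hodge_p hdim \<sigma> \<psi> i + hodge_p hdim \<sigma> \<psi> (n + 1 - i) = w"
    using sym by blast
  have "a0 < 0"
    using a0_lt Min_weight_minus_twice_hodge_p_first_nonpos[OF hodge reg n_pos sym'] by linarith
  hence twist: "(a \<tau> = 0 \<longleftrightarrow> ?Z (res \<tau>)) \<and> (0 < a \<tau> \<longleftrightarrow> r \<in> ?half)" if "\<tau> \<in> \<Phi>" for \<tau>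
    using that a_def r_le n_pos hodge_twist_sign[OF hodge reg sym', of r "res \<tau>" \<phi>]
    by (cases "r = 0") auto
  have "critical cc ninf \<longleftrightarrow> (\<forall>\<tau>\<in>\<Phi>. a \<tau> \<noteq> 0)"
    using critical_iff_on_cm_type[OF _ cmtype] cm inf_type unfolding cm_extension_def by force
  also have "\<dots> \<longleftrightarrow> (\<forall>\<tau>\<in>\<Phi>. \<not> ?Z (res \<tau>))"
    using twist by blast
  also have "\<dots> \<longleftrightarrow> (\<forall>\<sigma>\<in>res ` \<Phi>. \<not> ?Z \<sigma>)"
    by simp
  also have "\<dots> \<longleftrightarrow> (\<forall>\<sigma>. \<not> ?Z \<sigma>)"
    using cm_type_restriction_surj[OF cm cmtype] by simp
  finally have critical: "critical cc ninf \<longleftrightarrow> (\<forall>\<sigma>. \<not> ?Z \<sigma>)" .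
  have "ninf \<tau> > ninf (cc \<tau>) \<longleftrightarrow> r \<in> ?half" if "\<tau> \<in> \<Phi>" for \<tau>
    using inf_type twist that by force
  moreover have "\<Phi> \<noteq> {}" using cmtype unfolding is_cm_type_def by auto
  ultimately show ?thesis using critical by blast
qed

end
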